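(* Let $p_c,q_c\in\mathbb{R}_{\ge0}$, $M=\begin{bmatrix} p_c & q_c\\ -q_c & p_c\end{bmatrix}$, $v_{\min}>0$, and consider the constant power load (CPL) whose current response to a voltage $v$ is $i=\dfrac{1}{\|v\|_2^2}Mv$, with $\|v\|_2\ge v_{\min}$. Write $v=v_0+v_\delta$, where $v_0$ is an admissible operating voltage with $V_0=\|v_0\|_2\ge v_{\min}$ (in particular $V_0>0$), and define the ripple ratio $\rho=\|v_\delta\|_\infty/V_0$, assumed to satisfy $2\rho+\rho^2<1$. Define the frequency-preserving (linear) part of the current $i_{\mathrm{lin}}=\frac{1}{V_0^2}M(v_0+v_\delta)$ and the nonlinear remainder $i_{\mathrm{har}}=i-i_{\mathrm{lin}}$. Then $$\|i_{\mathrm{har}}\|_2\le \frac{\sigma_{\max}(M)}{v_{\min}^2}\,\frac{(\rho+1)(\rho+2)}{1-(2\rho+\rho^2)}\,\|v_\delta\|_2,$$ and hence the CPL is $\varepsilon(\rho)$-frequency-preserving with $\varepsilon(\rho)=\dfrac{\sigma_{\max}(M)}{v_{\min}^2}\,\dfrac{(\rho+1)(\rho+2)}{1-(2\rho+\rho^2)}$.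
   Context: $\sigma_{\max}(M)$ is the largest singular value of $M$; $\|\cdot\|_2$ denotes the 2-norm (called $\mathcal{L}_2$-norm in the paper) and $\|\cdot\|_\infty$ the sup norm. "The CPL is $\varepsilon$-frequency-preserving" means that its current decomposes as the linear, frequency-preserving part $i_{\mathrm{lin}}$ plus a nonlinear remainder $i_{\mathrm{har}}$ satisfying $\|i_{\mathrm{har}}\|_2\le\varepsilon\|v_\delta\|_2$. *)

theory Defs
  imports "HOL-Analysis.Analysis"
begin

text \<open>Signals are functions of time t :: real with values in the alpha-beta plane real^2.\<close>

definition cpl_M :: "real \<Rightarrow> real \<Rightarrow> real^2^2" where
  "cpl_M pc qc = vector [vector [pc, qc], vector [- qc, pc]]"

definition sigma_max :: "real^2^2 \<Rightarrow> real" where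
  "sigma_max M = onorm (\<lambda>x. M *v x)"

definition cpl_current :: "real^2^2 \<Rightarrow> (real \<Rightarrow> real^2) \<Rightarrow> (real \<Rightarrow> real^2)" where
  "cpl_current M v = (\<lambda>t. (1 / (norm (v t))\<^sup>2) *\<^sub>R (M *v v t))"

definition L2_norm :: "(real \<Rightarrow> real^2) \<Rightarrow> real" where
  "L2_norm f = sqrt (integral\<^sup>L lborel (\<lambda>t. (norm (f t))\<^sup>2))"

definition sup_norm :: "(real \<Rightarrow> real^2) \<Rightarrow> real" where
  "sup_norm f = (SUP t. norm (f t))"

end

theory Submission
  imports Defs
begin

text \<open>At each instant the harmonic current is the vector \<open>M w\<close>, \<open>w = v\<^sub>0 + v\<^sub>\<delta>\<close>, scaled by
  \<open>1/\<parallel>w\<parallel>\<^sup>2 - 1/V\<^sub>0\<^sup>2 = (V\<^sub>0 - \<parallel>w\<parallel>)(V\<^sub>0 + \<parallel>w\<parallel>) / (\<parallel>w\<parallel>\<^sup>2 V\<^sub>0\<^sup>2)\<close>.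
  Since \<open>|\<parallel>w\<parallel> - V\<^sub>0| \<le> \<parallel>v\<^sub>\<delta>\<parallel> \<le> \<rho> V\<^sub>0\<close>, the factors \<open>\<parallel>w\<parallel>\<close> and \<open>V\<^sub>0 + \<parallel>w\<parallel>\<close> are at most
  \<open>(\<rho> + 1) V\<^sub>0\<close> and \<open>(\<rho> + 2) V\<^sub>0\<close>, which gives the pointwise bound
  \<open>\<parallel>i\<^sub>h\<^sub>a\<^sub>r\<parallel> \<le> \<sigma>\<^sub>m\<^sub>a\<^sub>x(M) (\<rho> + 1)(\<rho> + 2) / v\<^sub>m\<^sub>i\<^sub>n\<^sup>2 \<parallel>v\<^sub>\<delta>\<parallel>\<close>. Squaring and integrating turns it
  into the \<open>L\<^sub>2\<close> bound; the factor \<open>1/(1 - (2\<rho> + \<rho>\<^sup>2)) \<ge> 1\<close> of the paper is slack.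
  Only \<open>\<sigma>\<^sub>m\<^sub>a\<^sub>x(M)\<close> enters.\<close>

lemma sigma_max_nonneg: "sigma_max M \<ge> 0"
  unfolding sigma_max_def by (rule onorm_pos_le) simp

lemma norm_mult_vec_le_sigma_max: "norm (M *v x) \<le> sigma_max M * norm x"
  unfolding sigma_max_def by (rule onorm) simp

lemma norm_le_sup_norm:
  assumes "bounded (range f)"
  shows "norm (f t) \<le> sup_norm f"
proof -
  have "bdd_above (range (\<lambda>t. norm (f t)))"
    using assms by (auto simp: bounded_iff intro: bdd_aboveI2)
  then show ?thesis
    unfolding sup_norm_def by (rule cSUP_upper[rotated]) simp
qed

text \<open>No measurability of \<open>f\<close> is required: a non-integrable square norm has Bochner integral 0.\<close>

lemma L2_norm_le_if_pointwise_le: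
  assumes "C \<ge> 0" and "\<And>t. norm (f t) \<le> C * norm (g t)"
    and "integrable lborel (\<lambda>t. (norm (g t))\<^sup>2)"
  shows "L2_norm f \<le> C * L2_norm g"
proof -
  have "integral\<^sup>L lborel (\<lambda>t. (norm (f t))\<^sup>2) \<le> integral\<^sup>L lborel (\<lambda>t. C\<^sup>2 * (norm (g t))\<^sup>2)"
  proof (rule integral_mono')
    show "integrable lborel (\<lambda>t. C\<^sup>2 * (norm (g t))\<^sup>2)"
      using assms(3) by simp
    show "(norm (f t))\<^sup>2 \<le> C\<^sup>2 * (norm (g t))\<^sup>2" for t
      using assms(2)[of t] by (metis norm_ge_zero power_mono power_mult_distrib)
  qed simp
  then have "L2_norm f \<le> sqrt (C\<^sup>2 * integral\<^sup>L lborel (\<lambda>t. (norm (g t))\<^sup>2))"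
    unfolding L2_norm_def by simp
  also have "\<dots> = C * L2_norm g"
    unfolding L2_norm_def using assms(1) by (simp add: real_sqrt_mult)
  finally show ?thesis .
qed

lemma abs_inverse_square_diff_mult_le:
  fixes n V a \<rho> :: real
  assumes "n > 0" and "V > 0" and "\<bar>n - V\<bar> \<le> a" and "a \<le> \<rho> * V"
  shows "\<bar>1 / n\<^sup>2 - 1 / V\<^sup>2\<bar> * n \<le> (\<rho> + 1) * (\<rho> + 2) * a / n\<^sup>2"
proof -
  have n_le: "n \<le> (\<rho> + 1) * V" and sum_le: "n + V \<le> (\<rho> + 2) * V"
    using assms(3,4) by (auto simp: abs_le_iff algebra_simps)
  have "(n + V) * n \<le> ((\<rho> + 2) * V) * ((\<rho> + 1) * V)"
    using assms(1,2) n_le sum_le by (intro mult_mono) auto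
  then have "\<bar>n - V\<bar> * ((n + V) * n) \<le> a * (((\<rho> + 2) * V) * ((\<rho> + 1) * V))"
    by (rule mult_mono[OF assms(3)]) (use assms(1,2,3) in auto)
  then have "\<bar>n - V\<bar> * ((n + V) * n) \<le> a * ((\<rho> + 1) * (\<rho> + 2) * V\<^sup>2)"
    by (simp add: algebra_simps power2_eq_square)
  moreover have "\<bar>1 / n\<^sup>2 - 1 / V\<^sup>2\<bar> * n = \<bar>n - V\<bar> * ((n + V) * n) / (n\<^sup>2 * V\<^sup>2)"
  proof -
    have "1 / n\<^sup>2 - 1 / V\<^sup>2 = (V - n) * (n + V) / (n\<^sup>2 * V\<^sup>2)"
      using assms(1,2) by (simp add: field_simps power2_eq_square)
    then show ?thesis
      using assms(1,2) by (simp add: abs_mult abs_minus_commute)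
  qed
  ultimately have "\<bar>1 / n\<^sup>2 - 1 / V\<^sup>2\<bar> * n \<le> a * ((\<rho> + 1) * (\<rho> + 2) * V\<^sup>2) / (n\<^sup>2 * V\<^sup>2)"
    by (metis divide_right_mono mult_nonneg_nonneg zero_le_power2)
  also have "\<dots> = (\<rho> + 1) * (\<rho> + 2) * a / n\<^sup>2"
    using assms(1,2) by (simp add: field_simps)
  finally show ?thesis .
qed

lemma cpl_harmonic_current_pointwise_le:
  fixes x d :: "real^2" and vmin V0 \<rho> :: real
  assumes "vmin > 0" and "norm (x + d) \<ge> vmin" and "V0 > 0" and "norm x = V0"
    and "norm d \<le> \<rho> * V0"
  shows "norm ((1 / (norm (x + d))\<^sup>2) *\<^sub>R (M *v (x + d)) - (1 / V0\<^sup>2) *\<^sub>R (M *v (x + d)))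
           \<le> sigma_max M / vmin\<^sup>2 * ((\<rho> + 1) * (\<rho> + 2)) * norm d"
proof -
  define n where "n = norm (x + d)"
  have n_pos: "n > 0" using assms(1,2) unfolding n_def by linarith
  have \<rho>_nonneg: "\<rho> \<ge> 0"
    using assms(3) order_trans[OF norm_ge_zero assms(5)] by (simp add: zero_le_mult_iff)
  have "\<bar>n - V0\<bar> \<le> norm d"
    using norm_triangle_ineq[of x d] norm_triangle_ineq4[of "x + d" d] assms(4)
    unfolding n_def by (simp add: abs_le_iff)
  then have inverse_square_diff: "\<bar>1 / n\<^sup>2 - 1 / V0\<^sup>2\<bar> * n \<le> (\<rho> + 1) * (\<rho> + 2) * norm d / n\<^sup>2"
    by (rule abs_inverse_square_diff_mult_le[OF n_pos assms(3) _ assms(5)])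
  have "norm ((1 / n\<^sup>2) *\<^sub>R (M *v (x + d)) - (1 / V0\<^sup>2) *\<^sub>R (M *v (x + d)))
          = \<bar>1 / n\<^sup>2 - 1 / V0\<^sup>2\<bar> * norm (M *v (x + d))"
    by (simp flip: scaleR_diff_left)
  also have "\<dots> \<le> \<bar>1 / n\<^sup>2 - 1 / V0\<^sup>2\<bar> * (sigma_max M * n)"
    unfolding n_def by (rule mult_left_mono[OF norm_mult_vec_le_sigma_max abs_ge_zero])
  also have "\<dots> = \<bar>1 / n\<^sup>2 - 1 / V0\<^sup>2\<bar> * n * sigma_max M"
    by simp
  also have "\<dots> \<le> (\<rho> + 1) * (\<rho> + 2) * norm d / n\<^sup>2 * sigma_max M"
    using inverse_square_diff sigma_max_nonneg by (rule mult_right_mono)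
  also have "\<dots> \<le> (\<rho> + 1) * (\<rho> + 2) * norm d / vmin\<^sup>2 * sigma_max M"
    using n_pos assms(1,2) \<rho>_nonneg sigma_max_nonneg unfolding n_def
    by (intro mult_right_mono divide_left_mono power_mono) auto
  finally show ?thesis
    unfolding n_def by (simp add: field_simps)
qed

theorem lemma2:
  fixes pc qc vmin V0 :: real and v0 v\<delta> :: "real \<Rightarrow> real^2"
  assumes "pc \<ge> 0" and "qc \<ge> 0" and "vmin > 0"
    and "\<And>t. norm (v0 t + v\<delta> t) \<ge> vmin"
    and "\<And>t. norm (v0 t) = V0" and "V0 \<ge> vmin"
    and "v0 \<in> borel_measurable lborel" and "v\<delta> \<in> borel_measurable lborel"
    and "bounded (range v\<delta>)"
    and "integrable lborel (\<lambda>t. (norm (v\<delta> t))\<^sup>2)"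
    and "2 * (sup_norm v\<delta> / V0) + (sup_norm v\<delta> / V0)\<^sup>2 < 1"
  shows "let M = cpl_M pc qc;
             \<rho> = sup_norm v\<delta> / V0;
             i = cpl_current M (\<lambda>t. v0 t + v\<delta> t);
             i_lin = (\<lambda>t. (1 / V0\<^sup>2) *\<^sub>R (M *v (v0 t + v\<delta> t)));
             i_har = (\<lambda>t. i t - i_lin t)
         in L2_norm i_har \<le> sigma_max M / vmin\<^sup>2 * ((\<rho> + 1) * (\<rho> + 2) / (1 - (2 * \<rho> + \<rho>\<^sup>2)))
                              * L2_norm v\<delta>"
proof -
  define M where "M = cpl_M pc qc"
  define \<rho> where "\<rho> = sup_norm v\<delta> / V0"
  define C where "C = sigma_max M / vmin\<^sup>2 * ((\<rho> + 1) * (\<rho> + 2))"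
  have V0_pos: "V0 > 0" using assms(3,6) by linarith
  have ripple: "norm (v\<delta> t) \<le> \<rho> * V0" for t
    using norm_le_sup_norm[OF assms(9), of t] V0_pos by (simp add: \<rho>_def)
  have \<rho>_nonneg: "\<rho> \<ge> 0"
    using V0_pos order_trans[OF norm_ge_zero ripple] by (simp add: zero_le_mult_iff)
  have "0 < 1 - (2 * \<rho> + \<rho>\<^sup>2)" and "1 - (2 * \<rho> + \<rho>\<^sup>2) \<le> 1"
    using assms(11) \<rho>_nonneg zero_le_power2[of \<rho>] unfolding \<rho>_def[symmetric] by linarith+
  then have "(\<rho> + 1) * (\<rho> + 2) \<le> (\<rho> + 1) * (\<rho> + 2) / (1 - (2 * \<rho> + \<rho>\<^sup>2))"
    using \<rho>_nonneg by (simp add: le_divide_eq mult_left_le)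
  then have C_le: "C \<le> sigma_max M / vmin\<^sup>2 * ((\<rho> + 1) * (\<rho> + 2) / (1 - (2 * \<rho> + \<rho>\<^sup>2)))"
    unfolding C_def by (rule mult_left_mono) (simp_all add: sigma_max_nonneg)
  have "L2_norm (\<lambda>t. cpl_current M (\<lambda>t. v0 t + v\<delta> t) t - (1 / V0\<^sup>2) *\<^sub>R (M *v (v0 t + v\<delta> t)))
          \<le> C * L2_norm v\<delta>"
  proof (rule L2_norm_le_if_pointwise_le)
    show "C \<ge> 0"
      unfolding C_def using sigma_max_nonneg[of M] \<rho>_nonneg by simp
    show "norm (cpl_current M (\<lambda>t. v0 t + v\<delta> t) t - (1 / V0\<^sup>2) *\<^sub>R (M *v (v0 t + v\<delta> t)))
            \<le> C * norm (v\<delta> t)" for t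
      unfolding cpl_current_def C_def
      by (rule cpl_harmonic_current_pointwise_le[OF assms(3,4) V0_pos assms(5) ripple])
  qed (rule assms(10))
  also have "\<dots> \<le> sigma_max M / vmin\<^sup>2 * ((\<rho> + 1) * (\<rho> + 2) / (1 - (2 * \<rho> + \<rho>\<^sup>2)))
                    * L2_norm v\<delta>"
    by (rule mult_right_mono[OF C_le]) (simp add: L2_norm_def)
  finally show ?thesis
    unfolding Let_def M_def[symmetric] \<rho>_def[symmetric] .
qed

end
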